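(* Consider an RB instance satisfying Assumption 2 in which $P(s,a,s')>0$ for all $s,s'\in\mathbb S$, $a\in\{0,1\}$. Then there exist constants $\eta'>0$ and $K_{\mathrm{noise}}>0$ such that for all sufficiently large $N$, every time $t$, every system state with $\|X_t([N])-\mu^*\|_1\le\eta'$ (for which Optimal Local Control applied to all $N$ arms is defined), and every $\xi\in\mathbb R^{\mathbb S}$ with $\|\xi\|_2=1$ and $\mu^*\xi^\top=0$: if $\mathbf A_t$ is chosen by Optimal Local Control applied to all $N$ arms, then $$\mathbb E\Big[\big|\big(X_{t+1}([N])-\mu^*-(X_t([N])-\mu^* )\Phi\big)\xi^\top\big|\,\Big|\,X_t,\mathbf A_t\Big]\ge\frac{K_{\mathrm{noise}}}{\sqrt N}.$$
   Context: Single-armed MDP $(\mathbb S,\{0,1\},P,r)$, finite $\mathbb S$, budget $\alpha\in(0,1)$; $N$ arms transition independently by $P$ given states and actions. $X_t([N],s)=\frac1N\#\{i:S_t(i)=s\}$ (row vector $X_t([N])$). LP relaxation: maximize $\sum r(s,a)y(s,a)$ over $y\ge0$ s.t. $\sum_sy(s,1)=\alpha$, $\sum_{s',a}y(s',a)P(s',a,s)=\sum_ay(s,a)$ for all $s$, $\sum y=1$; $y^*$ a fixed optimal solution. $\bar\pi^*(a|s)=y^*(s,a)/(y^*(s,0)+y^*(s,1))$ if denominator $>0$, else $1/2$; $P_{\bar\pi^*}(s,s')=\sum_a\bar\pi^*(a|s)P(s,a,s')$; $\mu^*(s)=y^*(s,0)+y^*(s,1)$. Assumption 2: unique $\tilde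 s$ with $y^*(\tilde s,0),y^*(\tilde s,1)>0$. $\Phi=P_{\bar\pi^*}-\mathbf 1^\top\mu^*-(c-\alpha\mathbf 1)^\top(P_1(\tilde s)-P_0(\tilde s))$, $c=(\bar\pi^*(1|s))_s$, $P_a(\tilde s)=(P(\tilde s,a,s))_s$, $\mathbf 1$ all-ones row vector. $S^+,S^-,S^\emptyset$: states with ($y^*(s,1)>0=y^*(s,0)$), ($y^*(s,1)=0<y^*(s,0)$), ($y^*(s,1)=y^*(s,0)=0$). Randomized rounding of $c\ge0$: $\lceil c\rceil$ w.p. $c-\lfloor c\rfloor$, else $\lfloor c\rfloor$. Optimal Local Control applied to all $N$ arms with $z(s)$ arms in state $s$, defined when $\sum_{s\neq\tilde s}\bar\pi^*(1|s)z(s)\le\alpha N-|S^\emptyset|-1$ and $\sum_{s\neq\tilde s}\bar\pi^*(0|s)z(s)\le(1-\alpha)N-|S^\emptyset|-1$: let $B$ be a randomized rounding of $\alpha N$; activate all arms in $S^+$, none in $S^-$, a randomized rounding of $z(s)/2$ arms in each $s\in S^\emptyset$, and arms in $\tilde s$ so that exactly $B$ are active. *)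

theory Defs
  imports "HOL-Probability.Probability"
begin

(* Single-armed MDP: finite state type 'a, actions bool (False = action 0, True = action 1),
   transition kernel P s a :: 'a pmf, i.e. P(s,a,s') = pmf (P s a) s'. *)

definition lp_feasible :: "('a::finite \<Rightarrow> bool \<Rightarrow> 'a pmf) \<Rightarrow> real \<Rightarrow> ('a \<Rightarrow> bool \<Rightarrow> real) \<Rightarrow> bool" where
  "lp_feasible P \<alpha> y \<longleftrightarrow>
     (\<forall>s a. y s a \<ge> 0) \<and>
     (\<Sum>s\<in>UNIV. y s True) = \<alpha> \<and>
     (\<forall>s. (\<Sum>s'\<in>UNIV. \<Sum>a\<in>UNIV. y s' a * pmf (P s' a) s) = (\<Sum>a\<in>UNIV. y s a)) \<and>
     (\<Sum>s\<in>UNIV. \<Sum>a\<in>UNIV. y s a) = 1"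

definition lp_value :: "('a::finite \<Rightarrow> bool \<Rightarrow> real) \<Rightarrow> ('a \<Rightarrow> bool \<Rightarrow> real) \<Rightarrow> real" where
  "lp_value r y = (\<Sum>s\<in>UNIV. \<Sum>a\<in>UNIV. r s a * y s a)"

definition lp_optimal :: "('a::finite \<Rightarrow> bool \<Rightarrow> 'a pmf) \<Rightarrow> ('a \<Rightarrow> bool \<Rightarrow> real) \<Rightarrow> real \<Rightarrow> ('a \<Rightarrow> bool \<Rightarrow> real) \<Rightarrow> bool" where
  "lp_optimal P r \<alpha> y \<longleftrightarrow> lp_feasible P \<alpha> y \<and>
     (\<forall>y'. lp_feasible P \<alpha> y' \<longrightarrow> lp_value r y' \<le> lp_value r y)"

definition mu_star :: "('a \<Rightarrow> bool \<Rightarrow> real) \<Rightarrow> 'a \<Rightarrow> real" where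
  "mu_star y s = y s False + y s True"

definition pibar :: "('a \<Rightarrow> bool \<Rightarrow> real) \<Rightarrow> 'a \<Rightarrow> bool \<Rightarrow> real" where
  "pibar y s a = (if mu_star y s > 0 then y s a / mu_star y s else 1/2)"

definition P_pibar :: "('a::finite \<Rightarrow> bool \<Rightarrow> 'a pmf) \<Rightarrow> ('a \<Rightarrow> bool \<Rightarrow> real) \<Rightarrow> 'a \<Rightarrow> 'a \<Rightarrow> real" where
  "P_pibar P y s s' = (\<Sum>a\<in>UNIV. pibar y s a * pmf (P s a) s')"

(* \<Phi> = P_{\<bar>\<pi>*} - 1^T \<mu>* - (c - \<alpha> 1)^T (P_1(s~) - P_0(s~)),  with c(s) = \<bar>\<pi>*(1|s) *)
definition Phi :: "('a::finite \<Rightarrow> bool \<Rightarrow> 'a pmf) \<Rightarrow> real \<Rightarrow> ('a \<Rightarrow> bool \<Rightarrow> real) \<Rightarrow> 'a \<Rightarrow> 'a \<Rightarrow> 'a \<Rightarrow> real" where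
  "Phi P \<alpha> y st s s' = P_pibar P y s s' - mu_star y s'
      - (pibar y s True - \<alpha>) * (pmf (P st True) s' - pmf (P st False) s')"

definition S_plus :: "('a \<Rightarrow> bool \<Rightarrow> real) \<Rightarrow> 'a set" where
  "S_plus y = {s. y s True > 0 \<and> y s False = 0}"
definition S_minus :: "('a \<Rightarrow> bool \<Rightarrow> real) \<Rightarrow> 'a set" where
  "S_minus y = {s. y s True = 0 \<and> y s False > 0}"
definition S_empty :: "('a \<Rightarrow> bool \<Rightarrow> real) \<Rightarrow> 'a set" where
  "S_empty y = {s. y s True = 0 \<and> y s False = 0}"

definition rround :: "real \<Rightarrow> int pmf" where
  "rround c = map_pmf (\<lambda>b. if b then \<lceil>c\<rceil> else \<lfloor>c\<rfloor>) (bernoulli_pmf (c - of_int \<lfloor>c\<rfloor>))"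

definition cnt :: "nat \<Rightarrow> (nat \<Rightarrow> 'a) \<Rightarrow> 'a \<Rightarrow> nat" where
  "cnt N S s = card {i. i < N \<and> S i = s}"

definition Xfrac :: "nat \<Rightarrow> (nat \<Rightarrow> 'a) \<Rightarrow> 'a \<Rightarrow> real" where
  "Xfrac N S s = real (cnt N S s) / real N"

definition olc_defined :: "real \<Rightarrow> ('a::finite \<Rightarrow> bool \<Rightarrow> real) \<Rightarrow> 'a \<Rightarrow> nat \<Rightarrow> (nat \<Rightarrow> 'a) \<Rightarrow> bool" where
  "olc_defined \<alpha> y st N S \<longleftrightarrow>
     (\<Sum>s\<in>UNIV - {st}. pibar y s True * real (cnt N S s)) \<le> \<alpha> * real N - real (card (S_empty y)) - 1 \<and>
     (\<Sum>s\<in>UNIV - {st}. pibar y s False * real (cnt N S s)) \<le> (1 - \<alpha>) * real N - real (card (S_empty y)) - 1"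

(* act is a possible realization of the action vector chosen by Optimal Local Control
   (state st = s~): all arms in S+ active, none in S-, a randomized rounding of z(s)/2
   arms active in each s in S\<emptyset>, arms in s~ chosen so that exactly B are active,
   B a randomized rounding of \<alpha> N. *)
definition olc_action :: "real \<Rightarrow> ('a \<Rightarrow> bool \<Rightarrow> real) \<Rightarrow> 'a \<Rightarrow> nat \<Rightarrow> (nat \<Rightarrow> 'a) \<Rightarrow> (nat \<Rightarrow> bool) \<Rightarrow> bool" where
  "olc_action \<alpha> y st N S act \<longleftrightarrow>
     (\<forall>i<N. S i \<in> S_plus y \<longrightarrow> act i) \<and>
     (\<forall>i<N. S i \<in> S_minus y \<longrightarrow> \<not> act i) \<and>
     (\<forall>s\<in>S_empty y. int (card {i. i < N \<and> S i = s \<and> act i}) \<in> set_pmf (rround (real (cnt N S s) / 2))) \<and>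
     int (card {i. i < N \<and> act i}) \<in> set_pmf (rround (\<alpha> * real N))"

definition next_states :: "('a \<Rightarrow> bool \<Rightarrow> 'a pmf) \<Rightarrow> nat \<Rightarrow> (nat \<Rightarrow> 'a) \<Rightarrow> (nat \<Rightarrow> bool) \<Rightarrow> (nat \<Rightarrow> 'a) pmf" where
  "next_states P N S act = Pi_pmf {..<N} undefined (\<lambda>i. P (S i) (act i))"

end

theory Submission
  imports Defs
begin

text \<open>
  Given the current state and actions, the noise term equals \<open>(1/N) \<Sum>\<^sub>i \<xi>(S\<^sub>t\<^sub>+\<^sub>1(i))\<close>
  minus a constant, i.e. the empirical mean of \<open>N\<close> independent variables bounded by \<open>1\<close>.
  A unit vector \<open>\<xi>\<close> orthogonal to the distribution \<open>\<mu>*\<close> changes sign, so it takes two values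
  at distance at least \<open>1/\<surd>|S|\<close>; since every transition probability is at least some
  \<open>p > 0\<close>, each variable has variance at least \<open>v = p/(2|S|)\<close>, whatever state the arm is in
  and whatever action it receives. The centred sum \<open>Z\<close> then has \<open>E Z\<^sup>2 \<ge> N v\<close> and
  \<open>E Z\<^sup>4 \<le> 3 N\<^sup>2 2\<^sup>4\<close>, and the pointwise bound \<open>z\<^sup>2 \<le> t |z| + z\<^sup>4/t\<^sup>2\<close> with
  \<open>t \<sim> \<surd>N\<close> yields \<open>E |Z| \<ge> c \<surd>N\<close>. Adding a constant to a centred variable
  costs at most a factor \<open>2\<close> in \<open>E |\<cdot>|\<close>. As the bound holds for every state and every
  action vector, \<open>\<eta>' = 1\<close> and \<open>N\<^sub>0 = 1\<close> suffice.
\<close>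

lemma finite_set_Pi_pmf [simp]:
  "finite A \<Longrightarrow> finite (set_pmf (Pi_pmf A dflt (p :: 'i \<Rightarrow> 'a::finite pmf)))"
  by (simp add: set_Pi_pmf finite_PiE_dflt)

lemma expectation_le_const_finite:
  fixes f :: "'a::finite \<Rightarrow> real"
  shows "(\<And>a. f a \<le> c) \<Longrightarrow> measure_pmf.expectation q f \<le> c"
  by (rule measure_pmf.integral_le_const) (auto simp: integrable_measure_pmf_finite)

lemma expectation_pair_pmf:
  fixes f :: "'a \<times> 'b \<Rightarrow> real"
  assumes "finite (set_pmf M)" "finite (set_pmf Q)"
  shows "measure_pmf.expectation (pair_pmf M Q) f =
         measure_pmf.expectation M (\<lambda>a. measure_pmf.expectation Q (\<lambda>b. f (a, b)))"
proof -
  have "measure_pmf.expectation (pair_pmf M Q) f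
        = (\<Sum>z\<in>set_pmf M \<times> set_pmf Q. f z * pmf (pair_pmf M Q) z)"
    using assms by (intro integral_measure_pmf_real) auto
  also have "\<dots> = (\<Sum>a\<in>set_pmf M. \<Sum>b\<in>set_pmf Q. f (a, b) * (pmf M a * pmf Q b))"
    by (subst sum.cartesian_product) (auto simp: pmf_pair intro!: sum.cong)
  also have "\<dots> = (\<Sum>a\<in>set_pmf M. (\<Sum>b\<in>set_pmf Q. f (a, b) * pmf Q b) * pmf M a)"
    by (simp add: sum_distrib_left sum_distrib_right mult_ac)
  also have "\<dots> = measure_pmf.expectation M (\<lambda>a. measure_pmf.expectation Q (\<lambda>b. f (a, b)))"
    using assms by (simp add: integral_measure_pmf_real[of "set_pmf Q"] integral_measure_pmf_real[of "set_pmf M"])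
  finally show ?thesis .
qed

lemma expectation_Pi_pmf_insert:
  fixes p :: "'i \<Rightarrow> 'a::finite pmf" and F :: "('i \<Rightarrow> 'a) \<Rightarrow> real"
  assumes "finite A" "x \<notin> A"
  shows "measure_pmf.expectation (Pi_pmf (insert x A) dflt p) F =
         measure_pmf.expectation (p x)
           (\<lambda>a. measure_pmf.expectation (Pi_pmf A dflt p) (\<lambda>f. F (f(x := a))))"
  using assms by (simp add: Pi_pmf_insert expectation_pair_pmf case_prod_unfold)

lemma expectation_square_sum_independent:
  fixes X :: "'a \<Rightarrow> real" and Y :: "'b \<Rightarrow> real"
  assumes "finite (set_pmf M)" "finite (set_pmf Q)" "measure_pmf.expectation Q Y = 0"
  shows "measure_pmf.expectation M (\<lambda>a. measure_pmf.expectation Q (\<lambda>b. (X a + Y b)^2))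
         = measure_pmf.expectation M (\<lambda>a. (X a)^2) + measure_pmf.expectation Q (\<lambda>b. (Y b)^2)"
  using assms by (simp add: power2_sum integrable_measure_pmf_finite)

lemma expectation_fourth_power_sum_independent:
  fixes X :: "'a \<Rightarrow> real" and Y :: "'b \<Rightarrow> real"
  assumes "finite (set_pmf M)" "finite (set_pmf Q)"
    and "measure_pmf.expectation M X = 0" "measure_pmf.expectation Q Y = 0"
  shows "measure_pmf.expectation M (\<lambda>a. measure_pmf.expectation Q (\<lambda>b. (X a + Y b)^4))
         = measure_pmf.expectation M (\<lambda>a. (X a)^4)
           + 6 * measure_pmf.expectation M (\<lambda>a. (X a)^2) * measure_pmf.expectation Q (\<lambda>b. (Y b)^2)
           + measure_pmf.expectation Q (\<lambda>b. (Y b)^4)"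
proof -
  have "(X a + Y b)^4 = (X a)^4 + 4 * (X a)^3 * Y b + 6 * (X a)^2 * (Y b)^2
          + 4 * X a * (Y b)^3 + (Y b)^4" for a b
    by algebra
  then show ?thesis
    using assms by (simp add: integrable_measure_pmf_finite mult_ac)
qed

lemma expectation_Pi_pmf_insert_sum:
  fixes p :: "'i \<Rightarrow> 'a::finite pmf" and g :: "'i \<Rightarrow> 'a \<Rightarrow> real" and \<phi> :: "real \<Rightarrow> real"
  assumes "finite A" "x \<notin> A"
  shows "measure_pmf.expectation (Pi_pmf (insert x A) dflt p) (\<lambda>f. \<phi> (\<Sum>i\<in>insert x A. g i (f i))) =
         measure_pmf.expectation (p x) (\<lambda>a.
           measure_pmf.expectation (Pi_pmf A dflt p) (\<lambda>f. \<phi> (g x a + (\<Sum>i\<in>A. g i (f i)))))"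
proof -
  have "(\<Sum>i\<in>insert x A. g i ((f(x := a)) i)) = g x a + (\<Sum>i\<in>A. g i (f i))" for f a
  proof -
    have "(\<Sum>i\<in>A. g i ((f(x := a)) i)) = (\<Sum>i\<in>A. g i (f i))"
      using assms by (intro sum.cong) auto
    then show ?thesis
      using assms by simp
  qed
  then show ?thesis
    by (simp only: expectation_Pi_pmf_insert[OF assms])
qed

lemma expectation_Pi_pmf_centered_sum:
  fixes p :: "'i \<Rightarrow> 'a::finite pmf" and g :: "'i \<Rightarrow> 'a \<Rightarrow> real"
  assumes "finite A" "\<And>i. i \<in> A \<Longrightarrow> measure_pmf.expectation (p i) (g i) = 0"
  shows "measure_pmf.expectation (Pi_pmf A dflt p) (\<lambda>f. \<Sum>i\<in>A. g i (f i)) = 0"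
  using assms
proof (induction A rule: finite_induct)
  case (insert x A)
  have "measure_pmf.expectation (Pi_pmf (insert x A) dflt p) (\<lambda>f. \<Sum>i\<in>insert x A. g i (f i))
      = measure_pmf.expectation (p x) (\<lambda>a.
          measure_pmf.expectation (Pi_pmf A dflt p) (\<lambda>f. g x a + (\<Sum>i\<in>A. g i (f i))))"
    using insert.hyps by (rule expectation_Pi_pmf_insert_sum[where \<phi>="\<lambda>z. z"])
  also have "\<dots> = 0"
    using insert by (simp add: integrable_measure_pmf_finite)
  finally show ?case .
qed simp

lemma expectation_Pi_pmf_centered_sum_square:
  fixes p :: "'i \<Rightarrow> 'a::finite pmf" and g :: "'i \<Rightarrow> 'a \<Rightarrow> real"
  assumes "finite A" "\<And>i. i \<in> A \<Longrightarrow> measure_pmf.expectation (p i) (g i) = 0"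
  shows "measure_pmf.expectation (Pi_pmf A dflt p) (\<lambda>f. (\<Sum>i\<in>A. g i (f i))^2)
       = (\<Sum>i\<in>A. measure_pmf.expectation (p i) (\<lambda>a. (g i a)^2))"
  using assms
proof (induction A rule: finite_induct)
  case (insert x A)
  have "measure_pmf.expectation (Pi_pmf (insert x A) dflt p) (\<lambda>f. (\<Sum>i\<in>insert x A. g i (f i))^2)
      = measure_pmf.expectation (p x) (\<lambda>a.
          measure_pmf.expectation (Pi_pmf A dflt p) (\<lambda>f. (g x a + (\<Sum>i\<in>A. g i (f i)))^2))"
    using insert.hyps by (rule expectation_Pi_pmf_insert_sum[where \<phi>="\<lambda>z. z^2"])
  also have "\<dots> = (\<Sum>i\<in>insert x A. measure_pmf.expectation (p i) (\<lambda>a. (g i a)^2))"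
    using insert by (simp add: expectation_square_sum_independent expectation_Pi_pmf_centered_sum)
  finally show ?case .
qed simp

lemma expectation_Pi_pmf_centered_sum_square_le:
  fixes p :: "'i \<Rightarrow> 'a::finite pmf" and g :: "'i \<Rightarrow> 'a \<Rightarrow> real"
  assumes "finite A" "\<And>i. i \<in> A \<Longrightarrow> measure_pmf.expectation (p i) (g i) = 0"
    and bound: "\<And>i a. i \<in> A \<Longrightarrow> \<bar>g i a\<bar> \<le> b"
  shows "measure_pmf.expectation (Pi_pmf A dflt p) (\<lambda>f. (\<Sum>i\<in>A. g i (f i))^2) \<le> real (card A) * b^2"
proof -
  have "measure_pmf.expectation (Pi_pmf A dflt p) (\<lambda>f. (\<Sum>i\<in>A. g i (f i))^2)
      = (\<Sum>i\<in>A. measure_pmf.expectation (p i) (\<lambda>a. (g i a)^2))"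
    using assms(1,2) by (rule expectation_Pi_pmf_centered_sum_square)
  also have "\<dots> \<le> (\<Sum>i\<in>A. b^2)"
    using bound by (intro sum_mono expectation_le_const_finite power_mono_even)
      (auto intro: order_trans[OF _ abs_ge_self])
  finally show ?thesis
    by simp
qed

lemma expectation_Pi_pmf_centered_sum_fourth_power:
  fixes p :: "'i \<Rightarrow> 'a::finite pmf" and g :: "'i \<Rightarrow> 'a \<Rightarrow> real"
  assumes "finite A" "\<And>i. i \<in> A \<Longrightarrow> measure_pmf.expectation (p i) (g i) = 0"
    and bound: "\<And>i a. i \<in> A \<Longrightarrow> \<bar>g i a\<bar> \<le> b"
  shows "measure_pmf.expectation (Pi_pmf A dflt p) (\<lambda>f. (\<Sum>i\<in>A. g i (f i))^4)
       \<le> 3 * (real (card A))^2 * b^4"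
  using assms
proof (induction A rule: finite_induct)
  case (insert x A)
  let ?E = "measure_pmf.expectation (Pi_pmf A dflt p)" and ?Ex = "measure_pmf.expectation (p x)"
  let ?T = "\<lambda>f. \<Sum>i\<in>A. g i (f i)"
  have x_moments: "?Ex (\<lambda>a. (g x a)^4) \<le> b^4" "?Ex (\<lambda>a. (g x a)^2) \<le> b^2"
    using insert.prems(2) by (intro expectation_le_const_finite power_mono_even;
        auto intro: order_trans[OF _ abs_ge_self])+
  have T_moments: "?E (\<lambda>f. (?T f)^2) \<le> real (card A) * b^2" "?E (\<lambda>f. (?T f)^4) \<le> 3 * (real (card A))^2 * b^4"
    using insert by (auto intro: expectation_Pi_pmf_centered_sum_square_le)
  have "measure_pmf.expectation (Pi_pmf (insert x A) dflt p) (\<lambda>f. (\<Sum>i\<in>insert x A. g i (f i))^4)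
      = ?Ex (\<lambda>a. ?E (\<lambda>f. (g x a + ?T f)^4))"
    using insert.hyps by (rule expectation_Pi_pmf_insert_sum[where \<phi>="\<lambda>z. z^4"])
  also have "\<dots> = ?Ex (\<lambda>a. (g x a)^4) + 6 * ?Ex (\<lambda>a. (g x a)^2) * ?E (\<lambda>f. (?T f)^2)
      + ?E (\<lambda>f. (?T f)^4)"
    using insert by (intro expectation_fourth_power_sum_independent expectation_Pi_pmf_centered_sum) auto
  also have "\<dots> \<le> b^4 + 6 * b^2 * (real (card A) * b^2) + 3 * (real (card A))^2 * b^4"
    using x_moments T_moments by (intro add_mono mult_mono mult_left_mono) auto
  also have "\<dots> \<le> 3 * (real (card (insert x A)))^2 * b^4"
    using insert.hyps zero_le_even_power[of 4 b] by (simp add: power2_eq_square power4_eq_xxxx algebra_simps)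
  finally show ?case .
qed simp

lemma square_le_mult_abs_add_fourth_power:
  fixes z t :: real
  assumes "0 < t"
  shows "z^2 \<le> t * \<bar>z\<bar> + z^4 / t^2"
proof (cases "\<bar>z\<bar> \<le> t")
  case True
  have "z^2 = \<bar>z\<bar> * \<bar>z\<bar>"
    by (simp add: power2_eq_square abs_mult_self_eq)
  also have "\<dots> \<le> t * \<bar>z\<bar>"
    using True by (intro mult_right_mono) auto
  finally show ?thesis
    by (simp add: add_increasing2 zero_le_even_power)
next
  case False
  then have "t * t \<le> \<bar>z\<bar> * \<bar>z\<bar>"
    using assms by (intro mult_mono) auto
  then have "t^2 * z^2 \<le> z^2 * z^2"
    by (intro mult_right_mono) (simp_all add: power2_eq_square abs_mult_self_eq)
  then have "z^2 \<le> z^4 / t^2"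
    using assms by (simp add: field_simps power4_eq_xxxx power2_eq_square)
  then show ?thesis
    using assms by (simp add: add_increasing)
qed

lemma expectation_square_le_abs_fourth_power:
  fixes Z :: "'a \<Rightarrow> real"
  assumes "finite (set_pmf M)" "0 < t"
  shows "measure_pmf.expectation M (\<lambda>x. (Z x)^2)
         \<le> t * measure_pmf.expectation M (\<lambda>x. \<bar>Z x\<bar>) + measure_pmf.expectation M (\<lambda>x. (Z x)^4) / t^2"
proof -
  have "measure_pmf.expectation M (\<lambda>x. (Z x)^2)
        \<le> measure_pmf.expectation M (\<lambda>x. t * \<bar>Z x\<bar> + (Z x)^4 / t^2)"
    using assms square_le_mult_abs_add_fourth_power
    by (intro integral_mono) (auto simp: integrable_measure_pmf_finite)
  also have "\<dots> = t * measure_pmf.expectation M (\<lambda>x. \<bar>Z x\<bar>) + measure_pmf.expectation M (\<lambda>x. (Z x)^4) / t^2"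
    using assms by (simp add: integrable_measure_pmf_finite)
  finally show ?thesis .
qed

lemma expectation_abs_affine_ge:
  fixes Z :: "'a \<Rightarrow> real"
  assumes "finite (set_pmf M)" "measure_pmf.expectation M Z = 0" "0 \<le> k"
  shows "k * measure_pmf.expectation M (\<lambda>x. \<bar>Z x\<bar>) / 2 \<le> measure_pmf.expectation M (\<lambda>x. \<bar>k * Z x + d\<bar>)"
proof -
  have "\<bar>d\<bar> = \<bar>measure_pmf.expectation M (\<lambda>x. k * Z x + d)\<bar>"
    using assms by (simp add: integrable_measure_pmf_finite)
  also have "\<dots> \<le> measure_pmf.expectation M (\<lambda>x. \<bar>k * Z x + d\<bar>)"
    by (rule integral_abs_bound)
  finally have d: "\<bar>d\<bar> \<le> measure_pmf.expectation M (\<lambda>x. \<bar>k * Z x + d\<bar>)" .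
  have "k * measure_pmf.expectation M (\<lambda>x. \<bar>Z x\<bar>) = measure_pmf.expectation M (\<lambda>x. \<bar>k * Z x\<bar>)"
    using assms by (simp add: abs_mult)
  also have "\<dots> \<le> measure_pmf.expectation M (\<lambda>x. \<bar>k * Z x + d\<bar> + \<bar>d\<bar>)"
    using assms by (intro integral_mono) (auto simp: integrable_measure_pmf_finite)
  also have "\<dots> = measure_pmf.expectation M (\<lambda>x. \<bar>k * Z x + d\<bar>) + \<bar>d\<bar>"
    using assms by (simp add: integrable_measure_pmf_finite)
  finally show ?thesis
    using d by linarith
qed

lemma expectation_abs_Pi_pmf_centered_sum_ge:
  fixes p :: "'i \<Rightarrow> 'a::finite pmf" and g :: "'i \<Rightarrow> 'a \<Rightarrow> real"
  assumes A: "finite A" "A \<noteq> {}"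
    and centered: "\<And>i. i \<in> A \<Longrightarrow> measure_pmf.expectation (p i) (g i) = 0"
    and bound: "\<And>i a. i \<in> A \<Longrightarrow> \<bar>g i a\<bar> \<le> b"
    and var: "\<And>i. i \<in> A \<Longrightarrow> v \<le> measure_pmf.expectation (p i) (\<lambda>a. (g i a)^2)"
    and "0 < v" "0 < b"
  shows "v * sqrt (real (card A)) / (2 * b^2 * sqrt (6 / v))
         \<le> measure_pmf.expectation (Pi_pmf A dflt p) (\<lambda>f. \<bar>\<Sum>i\<in>A. g i (f i)\<bar>)"
proof -
  let ?E = "measure_pmf.expectation (Pi_pmf A dflt p)" and ?Z = "\<lambda>f. \<Sum>i\<in>A. g i (f i)"
  define n where "n = real (card A)"
  define c where "c = b^2 * sqrt (6 / v)"
  have n: "0 < n" using A by (simp add: n_def card_gt_0_iff)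
  have c: "0 < c" using \<open>0 < v\<close> \<open>0 < b\<close> by (simp add: c_def)
  have "n * v \<le> ?E (\<lambda>f. (?Z f)^2)"
  proof -
    have "n * v = (\<Sum>i\<in>A. v)" by (simp add: n_def)
    also have "\<dots> \<le> (\<Sum>i\<in>A. measure_pmf.expectation (p i) (\<lambda>a. (g i a)^2))"
      using var by (rule sum_mono)
    also have "\<dots> = ?E (\<lambda>f. (?Z f)^2)"
      using A(1) centered by (rule expectation_Pi_pmf_centered_sum_square[symmetric])
    finally show ?thesis .
  qed
  also have "\<dots> \<le> c * sqrt n * ?E (\<lambda>f. \<bar>?Z f\<bar>) + ?E (\<lambda>f. (?Z f)^4) / (c * sqrt n)^2"
    using A(1) c n by (intro expectation_square_le_abs_fourth_power) auto
  also have "?E (\<lambda>f. (?Z f)^4) / (c * sqrt n)^2 \<le> 3 * n^2 * b^4 / (c * sqrt n)^2"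
    using A(1) centered bound unfolding n_def
    by (intro divide_right_mono expectation_Pi_pmf_centered_sum_fourth_power) auto
  also have "3 * n^2 * b^4 / (c * sqrt n)^2 = n * v / 2"
    using n \<open>0 < v\<close> \<open>0 < b\<close> by (simp add: c_def power_mult_distrib power2_eq_square power4_eq_xxxx field_simps)
  finally have "n * v \<le> 2 * c * sqrt n * ?E (\<lambda>f. \<bar>?Z f\<bar>)"
    by linarith
  then have "n * v / (2 * c * sqrt n) \<le> ?E (\<lambda>f. \<bar>?Z f\<bar>)"
    using c n by (simp add: field_simps)
  moreover have "n * v / (2 * c * sqrt n) = v * sqrt n / (2 * c)"
  proof -
    have "n * v / (2 * c * sqrt n) = n / sqrt n * v / (2 * c)"
      by simp
    then show ?thesis
      using n by (simp add: real_div_sqrt)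
  qed
  ultimately show ?thesis
    by (simp add: n_def c_def mult.assoc)
qed

lemma ex_pos_lower_bound_finite:
  fixes f :: "'a::finite \<Rightarrow> real"
  assumes "\<And>x. 0 < f x"
  shows "\<exists>c>0. \<forall>x. c \<le> f x"
  using assms by (intro exI[of _ "Min (range f)"]) auto

lemma abs_le_one_of_sum_squares_eq_one:
  fixes \<xi> :: "'a::finite \<Rightarrow> real"
  assumes "(\<Sum>s\<in>UNIV. (\<xi> s)^2) = 1"
  shows "\<bar>\<xi> x\<bar> \<le> 1"
proof -
  have "(\<xi> x)^2 \<le> (\<Sum>s\<in>UNIV. (\<xi> s)^2)"
    by (rule member_le_sum) auto
  then show ?thesis
    using assms abs_square_le_1 by auto
qed

lemma ex_gap_of_unit_orthogonal_to_distribution: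
  fixes \<xi> \<mu> :: "'a::finite \<Rightarrow> real"
  assumes unit: "(\<Sum>s\<in>UNIV. (\<xi> s)^2) = 1" and orth: "(\<Sum>s\<in>UNIV. \<mu> s * \<xi> s) = 0"
    and distr: "\<And>s. 0 \<le> \<mu> s" "(\<Sum>s\<in>UNIV. \<mu> s) = 1"
  shows "\<exists>u w. 1 / real CARD('a) \<le> (\<xi> u - \<xi> w)^2"
proof -
  obtain u where u: "1 / real CARD('a) \<le> (\<xi> u)^2"
  proof (rule ccontr)
    assume "\<not> thesis"
    then have "\<forall>s. (\<xi> s)^2 < 1 / real CARD('a)"
      using that by (meson not_le)
    then have "(\<Sum>s\<in>UNIV. (\<xi> s)^2) < (\<Sum>s\<in>(UNIV::'a set). 1 / real CARD('a))"
      by (intro sum_strict_mono) auto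
    then show False
      using unit by simp
  qed
  \<comment> \<open>Since \<open>\<xi>\<close> averages to zero under \<open>\<mu>\<close>, it cannot have the sign of \<open>\<xi> u\<close> everywhere.\<close>
  obtain w where w: "\<xi> u * \<xi> w \<le> 0"
  proof (rule ccontr)
    assume "\<not> thesis"
    then have pos: "\<forall>s. 0 < \<xi> u * \<xi> s"
      using that by (meson not_le)
    obtain s0 where "0 < \<mu> s0"
      using distr by (metis antisym_conv1 sum.neutral zero_neq_one)
    then have "0 < (\<Sum>s\<in>UNIV. \<mu> s * (\<xi> u * \<xi> s))"
      using pos distr(1) by (intro sum_pos2[of UNIV s0]) (auto intro: mult_nonneg_nonneg less_imp_le)
    also have "\<dots> = \<xi> u * (\<Sum>s\<in>UNIV. \<mu> s * \<xi> s)"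
      by (simp add: sum_distrib_left mult_ac)
    finally show False
      using orth by simp
  qed
  have "(\<xi> u - \<xi> w)^2 = (\<xi> u)^2 - 2 * (\<xi> u * \<xi> w) + (\<xi> w)^2"
    by (simp add: power2_diff mult.assoc)
  moreover have "0 \<le> (\<xi> w)^2"
    by simp
  ultimately have "(\<xi> u)^2 \<le> (\<xi> u - \<xi> w)^2"
    using w by linarith
  then show ?thesis
    using u by (meson order_trans)
qed

lemma expectation_sq_dev_ge_gap:
  fixes q :: "'a::finite pmf" and \<xi> :: "'a \<Rightarrow> real"
  assumes "\<And>x. c \<le> pmf q x" "0 \<le> c"
  shows "c * (\<xi> u - \<xi> w)^2 / 2 \<le> measure_pmf.expectation q (\<lambda>x. (\<xi> x - m)^2)"
proof (cases "u = w")
  case False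
  have "(\<xi> u - m)^2 + (\<xi> w - m)^2 - (\<xi> u - \<xi> w)^2 / 2 = (\<xi> u + \<xi> w - 2 * m)^2 / 2"
    by (simp add: power2_eq_square field_simps)
  then have "(\<xi> u - \<xi> w)^2 / 2 \<le> (\<xi> u - m)^2 + (\<xi> w - m)^2"
    using zero_le_power2[of "\<xi> u + \<xi> w - 2 * m"] by linarith
  from mult_left_mono[OF this \<open>0 \<le> c\<close>]
  have "c * (\<xi> u - \<xi> w)^2 / 2 \<le> c * ((\<xi> u - m)^2 + (\<xi> w - m)^2)"
    by simp
  also have "\<dots> \<le> (\<xi> u - m)^2 * pmf q u + (\<xi> w - m)^2 * pmf q w"
    using assms by (simp add: distrib_left mult.commute add_mono mult_right_mono)
  also have "\<dots> = (\<Sum>x\<in>{u, w}. (\<xi> x - m)^2 * pmf q x)"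
    using False by simp
  also have "\<dots> \<le> (\<Sum>x\<in>UNIV. (\<xi> x - m)^2 * pmf q x)"
    by (rule sum_mono2) auto
  also have "\<dots> = measure_pmf.expectation q (\<lambda>x. (\<xi> x - m)^2)"
    by (rule integral_measure_pmf_real[symmetric]) auto
  finally show ?thesis .
qed simp

lemma sum_Xfrac_mult:
  fixes \<xi> :: "'a::finite \<Rightarrow> real"
  shows "(\<Sum>s\<in>UNIV. Xfrac N S s * \<xi> s) = (\<Sum>i<N. \<xi> (S i)) / real N"
proof -
  have "(\<Sum>i<N. \<xi> (S i)) = (\<Sum>s\<in>UNIV. \<Sum>i\<in>{i. i \<in> {..<N} \<and> S i = s}. \<xi> (S i))"
    by (rule sum.group[symmetric]) auto
  also have "\<dots> = (\<Sum>s\<in>UNIV. real (cnt N S s) * \<xi> s)"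
    by (simp add: cnt_def)
  finally show ?thesis
    by (simp add: Xfrac_def sum_divide_distrib)
qed

lemma expectation_abs_empirical_mean_ge:
  fixes p :: "nat \<Rightarrow> 'a::finite pmf" and \<xi> :: "'a \<Rightarrow> real"
  assumes "0 < N" "0 < v" and bound: "\<And>x. \<bar>\<xi> x\<bar> \<le> 1"
    and var: "\<And>i. i < N \<Longrightarrow> v \<le> measure_pmf.expectation (p i)
                 (\<lambda>x. (\<xi> x - measure_pmf.expectation (p i) \<xi>)^2)"
  shows "v / (16 * sqrt (6 / v)) / sqrt (real N)
         \<le> measure_pmf.expectation (Pi_pmf {..<N} dflt p) (\<lambda>f. \<bar>(\<Sum>i<N. \<xi> (f i)) / real N - c\<bar>)"
proof -
  let ?E = "measure_pmf.expectation (Pi_pmf {..<N} dflt p)"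
  define m where "m i = measure_pmf.expectation (p i) \<xi>" for i
  define Z where "Z f = (\<Sum>i<N. \<xi> (f i) - m i)" for f :: "nat \<Rightarrow> 'a"
  have centered: "measure_pmf.expectation (p i) (\<lambda>x. \<xi> x - m i) = 0" for i
    by (simp add: m_def integrable_measure_pmf_finite)
  have m_bound: "\<bar>m i\<bar> \<le> 1" for i
  proof -
    have "\<bar>m i\<bar> \<le> measure_pmf.expectation (p i) (\<lambda>x. \<bar>\<xi> x\<bar>)"
      unfolding m_def by (rule integral_abs_bound)
    also have "\<dots> \<le> 1"
      using bound by (rule expectation_le_const_finite)
    finally show ?thesis .
  qed
  then have "\<bar>\<xi> x - m i\<bar> \<le> 2" for i x
    using bound[of x] m_bound[of i] by arith
  then have "v * sqrt (real (card {..<N})) / (2 * 2^2 * sqrt (6 / v)) \<le> ?E (\<lambda>f. \<bar>Z f\<bar>)"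
    unfolding Z_def using \<open>0 < N\<close> \<open>0 < v\<close> centered var
    by (intro expectation_abs_Pi_pmf_centered_sum_ge) (auto simp: m_def)
  then have "1 / real N * (v * sqrt (real N) / (8 * sqrt (6 / v))) / 2 \<le> 1 / real N * ?E (\<lambda>f. \<bar>Z f\<bar>) / 2"
    by (intro divide_right_mono mult_left_mono) auto
  moreover have "v / (16 * sqrt (6 / v)) / sqrt (real N) = 1 / real N * (v * sqrt (real N) / (8 * sqrt (6 / v))) / 2"
  proof -
    have "v / (16 * s) / r = 1 / (r * r) * (v * r / (8 * s)) / 2" if "0 < r" for r s :: real
      using that by (simp add: field_simps)
    from this[of "sqrt (real N)" "sqrt (6 / v)"] show ?thesis
      using \<open>0 < N\<close> by simp
  qed
  ultimately have "v / (16 * sqrt (6 / v)) / sqrt (real N) \<le> 1 / real N * ?E (\<lambda>f. \<bar>Z f\<bar>) / 2"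
    by simp
  also have "\<dots> \<le> ?E (\<lambda>f. \<bar>1 / real N * Z f + ((\<Sum>i<N. m i) / real N - c)\<bar>)"
    unfolding Z_def using centered
    by (intro expectation_abs_affine_ge expectation_Pi_pmf_centered_sum) auto
  also have "\<dots> = ?E (\<lambda>f. \<bar>(\<Sum>i<N. \<xi> (f i)) / real N - c\<bar>)"
    by (simp add: Z_def sum_subtractf diff_divide_distrib)
  finally show ?thesis .
qed

lemma expectation_sq_dev_ge_of_pmf_lower_bound:
  fixes q :: "'a::finite pmf" and \<xi> \<mu> :: "'a \<Rightarrow> real"
  assumes "\<And>x. c \<le> pmf q x" "0 \<le> c"
    and "(\<Sum>s\<in>UNIV. (\<xi> s)^2) = 1" "(\<Sum>s\<in>UNIV. \<mu> s * \<xi> s) = 0"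
    and "\<And>s. 0 \<le> \<mu> s" "(\<Sum>s\<in>UNIV. \<mu> s) = 1"
  shows "c / (2 * real CARD('a)) \<le> measure_pmf.expectation q (\<lambda>x. (\<xi> x - m)^2)"
proof -
  obtain u w where gap: "1 / real CARD('a) \<le> (\<xi> u - \<xi> w)^2"
    using ex_gap_of_unit_orthogonal_to_distribution assms(3-6) by blast
  have "c / (2 * real CARD('a)) = c * (1 / real CARD('a)) / 2"
    by simp
  also have "\<dots> \<le> c * (\<xi> u - \<xi> w)^2 / 2"
    using gap \<open>0 \<le> c\<close> by (intro divide_right_mono mult_left_mono) auto
  also have "\<dots> \<le> measure_pmf.expectation q (\<lambda>x. (\<xi> x - m)^2)"
    using assms(1,2) by (rule expectation_sq_dev_ge_gap)
  finally show ?thesis .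
qed

lemma expectation_abs_noise_ge:
  fixes P :: "'a::finite \<Rightarrow> bool \<Rightarrow> 'a pmf" and \<xi> \<mu> D :: "'a \<Rightarrow> real"
  assumes "0 < N" and pm: "0 < pm" "\<And>s a s'. pm \<le> pmf (P s a) s'"
    and unit: "(\<Sum>s\<in>UNIV. (\<xi> s)^2) = 1" and orth: "(\<Sum>s\<in>UNIV. \<mu> s * \<xi> s) = 0"
    and distr: "\<And>s. 0 \<le> \<mu> s" "(\<Sum>s\<in>UNIV. \<mu> s) = 1"
  defines "v \<equiv> pm / (2 * real CARD('a))"
  shows "v / (16 * sqrt (6 / v)) / sqrt (real N) \<le> measure_pmf.expectation (next_states P N S act)
           (\<lambda>S'. \<bar>\<Sum>s'\<in>UNIV. (Xfrac N S' s' - \<mu> s' - D s') * \<xi> s'\<bar>)"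
proof -
  define c where "c = (\<Sum>s'\<in>UNIV. (\<mu> s' + D s') * \<xi> s')"
  have "(\<Sum>s'\<in>UNIV. (Xfrac N S' s' - \<mu> s' - D s') * \<xi> s') = (\<Sum>i<N. \<xi> (S' i)) / real N - c" for S'
  proof -
    have "(\<Sum>s'\<in>UNIV. (Xfrac N S' s' - \<mu> s' - D s') * \<xi> s')
        = (\<Sum>s'\<in>UNIV. Xfrac N S' s' * \<xi> s' - (\<mu> s' + D s') * \<xi> s')"
      by (intro sum.cong) (simp_all add: algebra_simps)
    then show ?thesis
      by (simp add: c_def sum_subtractf sum_Xfrac_mult)
  qed
  moreover have "v / (16 * sqrt (6 / v)) / sqrt (real N) \<le> measure_pmf.expectation (next_states P N S act)
      (\<lambda>S'. \<bar>(\<Sum>i<N. \<xi> (S' i)) / real N - c\<bar>)"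
    unfolding next_states_def v_def using \<open>0 < N\<close> pm unit orth distr
    by (intro expectation_abs_empirical_mean_ge abs_le_one_of_sum_squares_eq_one
        expectation_sq_dev_ge_of_pmf_lower_bound[where \<mu> = \<mu>]) auto
  ultimately show ?thesis
    by simp
qed

theorem mainTheorem13:
  fixes P :: "'a::finite \<Rightarrow> bool \<Rightarrow> 'a pmf"
    and r :: "'a \<Rightarrow> bool \<Rightarrow> real"
    and \<alpha> :: real
    and y :: "'a \<Rightarrow> bool \<Rightarrow> real"
    and st :: 'a
  assumes alpha: "0 < \<alpha>" "\<alpha> < 1"
    and opt: "lp_optimal P r \<alpha> y"
    and tilde: "y st False > 0" "y st True > 0"
    and uniq: "\<forall>s. y s False > 0 \<and> y s True > 0 \<longrightarrow> s = st"
    and Ppos: "\<forall>s a s'. pmf (P s a) s' > 0"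
  shows "\<exists>\<eta>'>0. \<exists>K>0. \<exists>N0::nat. \<forall>N\<ge>N0. \<forall>S :: nat \<Rightarrow> 'a.
           (\<Sum>s\<in>UNIV. \<bar>Xfrac N S s - mu_star y s\<bar>) \<le> \<eta>' \<longrightarrow>
           olc_defined \<alpha> y st N S \<longrightarrow>
           (\<forall>\<xi> :: 'a \<Rightarrow> real. sqrt (\<Sum>s\<in>UNIV. (\<xi> s)\<^sup>2) = 1 \<longrightarrow>
              (\<Sum>s\<in>UNIV. mu_star y s * \<xi> s) = 0 \<longrightarrow>
              (\<forall>act. olc_action \<alpha> y st N S act \<longrightarrow>
                 measure_pmf.expectation (next_states P N S act)
                   (\<lambda>S'. \<bar>\<Sum>s'\<in>UNIV. (Xfrac N S' s' - mu_star y s'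
                        - (\<Sum>s\<in>UNIV. (Xfrac N S s - mu_star y s) * Phi P \<alpha> y st s s')) * \<xi> s'\<bar>)
                 \<ge> K / sqrt (real N)))"
proof -
  have "lp_feasible P \<alpha> y"
    using opt by (simp add: lp_optimal_def)
  then have \<mu>: "\<And>s. 0 \<le> mu_star y s" "(\<Sum>s\<in>UNIV. mu_star y s) = 1"
    by (auto simp: lp_feasible_def mu_star_def UNIV_bool add.commute add_nonneg_nonneg)
  obtain pm where pm: "0 < pm" "\<And>s a s'. pm \<le> pmf (P s a) s'"
    using ex_pos_lower_bound_finite[of "\<lambda>(s, a, s'). pmf (P s a) s'"] Ppos by auto
  define v where "v = pm / (2 * real CARD('a))"
  have "0 < v"
    using pm by (simp add: v_def)
  have noise: "v / (16 * sqrt (6 / v)) / sqrt (real N) \<le> measure_pmf.expectation (next_states P N S act)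
      (\<lambda>S'. \<bar>\<Sum>s'\<in>UNIV. (Xfrac N S' s' - mu_star y s'
        - (\<Sum>s\<in>UNIV. (Xfrac N S s - mu_star y s) * Phi P \<alpha> y st s s')) * \<xi> s'\<bar>)"
    if "1 \<le> N" "sqrt (\<Sum>s\<in>UNIV. (\<xi> s)\<^sup>2) = 1" "(\<Sum>s\<in>UNIV. mu_star y s * \<xi> s) = 0"
    for N S \<xi> act
    using that pm \<mu> unfolding v_def by (intro expectation_abs_noise_ge) auto
  show ?thesis
    by (rule exI[of _ "1::real"],
        intro conjI exI[of _ "v / (16 * sqrt (6 / v))"] exI[of _ "1::nat"] allI impI noise)
      (use \<open>0 < v\<close> in auto)
qed

end
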